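(* Let $\mathcal{H}$ be a Hilbert space, $n\ge2$, and let $y_1,\dots,y_n\in\mathcal{H}$ satisfy $\|y_i\|\le1$ for all $i$ and $\|y_i-y_j\|>1/3$ for all $i\ne j$. Let $\mu=\frac1n\sum_{i=1}^n\delta_{y_i}$ and $\mu_n=\frac1n\sum_{i=1}^n\delta_{X_i}$ with $X_1,\dots,X_n$ i.i.d. of law $\mu$. Then $$\mathbb{E}\,W_2(\mu,\mu_n)\ge\mathbb{E}\,W_1(\mu,\mu_n)\ge\frac{1}{12\sqrt2}.$$ Consequently, if $y_1,\dots,y_n$ lie in a subspace of dimension $d$, then $\big(\mathbb{E}\,S_1^2(\mu,\mu_n)\big)^{1/2}\ge\frac{1}{12\sqrt{2d}}$.
   Context: $\Pi(\mu,\nu)$ is the set of couplings of $\mu,\nu$. $W_p(\mu,\nu)=\inf_{\pi\in\Pi(\mu,\nu)}\big(\int\|x-y\|^p\,d\pi(x,y)\big)^{1/p}$ for $p=1,2$, and $S_1(\mu,\nu)=\inf_{\pi\in\Pi(\mu,\nu)}\sup_{\|w\|\le1}\big(\int\langle w,x-y\rangle^2\,d\pi(x,y)\big)^{1/2}$. *)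

theory Defs
  imports "HOL-Analysis.Analysis" "HOL-Probability.Probability"
begin

definition couplings :: "'a pmf \<Rightarrow> 'b pmf \<Rightarrow> ('a \<times> 'b) pmf set" where
  "couplings p q = {\<pi>. map_pmf fst \<pi> = p \<and> map_pmf snd \<pi> = q}"

definition W1 :: "'a::real_normed_vector pmf \<Rightarrow> 'a pmf \<Rightarrow> real" where
  "W1 p q = (INF \<pi>\<in>couplings p q. measure_pmf.expectation \<pi> (\<lambda>(x,y). norm (x - y)))"

definition W2 :: "'a::real_normed_vector pmf \<Rightarrow> 'a pmf \<Rightarrow> real" where
  "W2 p q = sqrt (INF \<pi>\<in>couplings p q. measure_pmf.expectation \<pi> (\<lambda>(x,y). (norm (x - y))^2))"

definition S1 :: "'a::real_inner pmf \<Rightarrow> 'a pmf \<Rightarrow> real" where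
  "S1 p q = (INF \<pi>\<in>couplings p q.
      sqrt (SUP w\<in>{w. norm w \<le> 1}. measure_pmf.expectation \<pi> (\<lambda>(x,y). (inner w (x - y))^2)))"

definition empirical :: "nat \<Rightarrow> (nat \<Rightarrow> 'a) \<Rightarrow> 'a pmf" where
  "empirical n y = map_pmf y (pmf_of_set {..<n})"

definition iid_sample :: "nat \<Rightarrow> 'a::zero pmf \<Rightarrow> (nat \<Rightarrow> 'a) pmf" where
  "iid_sample n p = Pi_pmf {..<n} 0 (\<lambda>_. p)"

end

theory Submission
  imports Defs
begin

(*
  Since the points y i are more than 1/3 apart, a point of the support of mu that is missed by the
  sample X carries mass 1/n which every coupling of mu with the empirical measure of X has to move
  by more than 1/3. Hence W1 is at least a third of the missed mass, whose expectation is
  (1 - 1/n)^n >= 1/(2e) >= 1/(4 sqrt 2). W1 <= W2 is Jensen's inequality for each coupling.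
  For S1, expanding |x - y|^2 along an orthonormal basis of the (at most d-dimensional) span of the
  points shows that some unit direction carries at least a 1/d fraction of the second moment of
  any coupling, so S1 >= W2 / sqrt d >= W1 / sqrt d, and Jensen over the sample gives the bound on
  E S1^2.
*)

section \<open>Expectations under finitely supported distributions\<close>

lemma integral_mono_finite_pmf:
  fixes f g :: "'b \<Rightarrow> real"
  assumes "finite (set_pmf M)" "\<And>x. x \<in> set_pmf M \<Longrightarrow> f x \<le> g x"
  shows "measure_pmf.expectation M f \<le> measure_pmf.expectation M g"
  using assms by (intro integral_mono_AE integrable_measure_pmf_finite AE_pmfI)

lemma square_expectation_le_finite_pmf:
  fixes f :: "'b \<Rightarrow> real"
  assumes "finite (set_pmf M)"
  shows "(measure_pmf.expectation M f)\<^sup>2 \<le> measure_pmf.expectation M (\<lambda>x. (f x)\<^sup>2)"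
proof -
  have "measure_pmf.variance M f = measure_pmf.expectation M (\<lambda>x. (f x)\<^sup>2) - (measure_pmf.expectation M f)\<^sup>2"
    using assms by (intro measure_pmf.variance_eq integrable_measure_pmf_finite)
  with measure_pmf.variance_positive[of M f] show ?thesis by linarith
qed

lemma expectation_le_sqrt_expectation_square:
  fixes f g :: "'b \<Rightarrow> real"
  assumes "finite (set_pmf M)" "\<And>x. x \<in> set_pmf M \<Longrightarrow> 0 \<le> f x \<and> f x \<le> g x"
  shows "measure_pmf.expectation M f \<le> sqrt (measure_pmf.expectation M (\<lambda>x. (g x)\<^sup>2))"
proof -
  have "(measure_pmf.expectation M f)\<^sup>2 \<le> measure_pmf.expectation M (\<lambda>x. (f x)\<^sup>2)"
    using assms(1) by (rule square_expectation_le_finite_pmf)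
  also have "\<dots> \<le> measure_pmf.expectation M (\<lambda>x. (g x)\<^sup>2)"
    using assms by (intro integral_mono_finite_pmf power_mono) auto
  finally show ?thesis by (rule real_le_rsqrt)
qed

section \<open>Couplings and Wasserstein distances\<close>

lemma set_pmf_coupling:
  assumes "\<pi> \<in> couplings p q"
  shows "set_pmf \<pi> \<subseteq> set_pmf p \<times> set_pmf q"
  using assms unfolding couplings_def by force

lemma finite_set_pmf_coupling:
  assumes "\<pi> \<in> couplings p q" "finite (set_pmf p)" "finite (set_pmf q)"
  shows "finite (set_pmf \<pi>)"
  using set_pmf_coupling[OF assms(1)] assms(2,3) by (metis finite_SigmaI finite_subset)

lemma pair_pmf_in_couplings: "pair_pmf p q \<in> couplings p q"
  by (simp add: couplings_def map_fst_pair_pmf map_snd_pair_pmf)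

lemma W1_le_expectation:
  assumes "\<pi> \<in> couplings p q"
  shows "W1 p q \<le> measure_pmf.expectation \<pi> (\<lambda>(x, y). norm (x - y))"
  unfolding W1_def using assms
  by (intro cINF_lower bdd_belowI[where m = 0]) (auto intro!: integral_nonneg_AE)

lemma W1_nonneg: "0 \<le> W1 p q"
  unfolding W1_def using pair_pmf_in_couplings
  by (intro cINF_greatest) (auto intro!: integral_nonneg_AE)

lemma W2_sq_le_expectation:
  assumes "\<pi> \<in> couplings p q"
  shows "(W2 p q)\<^sup>2 \<le> measure_pmf.expectation \<pi> (\<lambda>(x, y). (norm (x - y))\<^sup>2)"
proof -
  let ?I = "INF \<pi>\<in>couplings p q. measure_pmf.expectation \<pi> (\<lambda>(x, y). (norm (x - y))\<^sup>2)"
  have "0 \<le> ?I"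
    using pair_pmf_in_couplings by (intro cINF_greatest) (auto intro!: integral_nonneg_AE)
  moreover have "?I \<le> measure_pmf.expectation \<pi> (\<lambda>(x, y). (norm (x - y))\<^sup>2)"
    using assms by (intro cINF_lower bdd_belowI[where m = 0]) (auto intro!: integral_nonneg_AE)
  ultimately show ?thesis
    by (simp add: W2_def)
qed

lemma W1_le_W2:
  assumes "finite (set_pmf p)" "finite (set_pmf q)"
  shows "W1 p q \<le> W2 p q"
proof -
  have "(W1 p q)\<^sup>2 \<le> (INF \<pi>\<in>couplings p q. measure_pmf.expectation \<pi> (\<lambda>(x, y). (norm (x - y))\<^sup>2))"
  proof (rule cINF_greatest)
    show "couplings p q \<noteq> {}" using pair_pmf_in_couplings by blast
  next
    fix \<pi> assume \<pi>: "\<pi> \<in> couplings p q"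
    have "W1 p q \<le> measure_pmf.expectation \<pi> (\<lambda>(x, y). norm (x - y))"
      using \<pi> by (rule W1_le_expectation)
    also have "\<dots> \<le> sqrt (measure_pmf.expectation \<pi> (\<lambda>z. ((\<lambda>(x, y). norm (x - y)) z)\<^sup>2))"
      by (rule expectation_le_sqrt_expectation_square[OF finite_set_pmf_coupling[OF \<pi> assms]]) auto
    finally have "(W1 p q)\<^sup>2 \<le> (sqrt (measure_pmf.expectation \<pi> (\<lambda>z. ((\<lambda>(x, y). norm (x - y)) z)\<^sup>2)))\<^sup>2"
      using W1_nonneg by (rule power_mono)
    then show "(W1 p q)\<^sup>2 \<le> measure_pmf.expectation \<pi> (\<lambda>(x, y). (norm (x - y))\<^sup>2)"
      by (simp add: case_prod_beta' integral_nonneg_AE)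
  qed
  then show ?thesis unfolding W2_def by (rule real_le_rsqrt)
qed

lemma W1_ge_separated:
  fixes p q :: "'a::real_normed_vector pmf"
  assumes "finite (set_pmf p)" "finite (set_pmf q)"
    and "\<And>x z. x \<in> set_pmf p \<Longrightarrow> z \<in> set_pmf q \<Longrightarrow> x \<noteq> z \<Longrightarrow> \<delta> \<le> norm (x - z)"
  shows "\<delta> * measure p (- set_pmf q) \<le> W1 p q"
  unfolding W1_def
proof (rule cINF_greatest)
  show "couplings p q \<noteq> {}"
    using pair_pmf_in_couplings by blast
next
  fix \<pi> assume \<pi>: "\<pi> \<in> couplings p q"
  have "\<delta> * measure p (- set_pmf q)
          = measure_pmf.expectation \<pi> (\<lambda>(x, z). \<delta> * indicator (- set_pmf q) x)"
    using \<pi> by (simp add: couplings_def case_prod_beta' flip: integral_map_pmf[of fst])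
  also have "\<dots> \<le> measure_pmf.expectation \<pi> (\<lambda>(x, z). norm (x - z))"
  proof (rule integral_mono_finite_pmf[OF finite_set_pmf_coupling[OF \<pi> assms(1,2)]])
    fix xz assume "xz \<in> set_pmf \<pi>"
    then show "(case xz of (x, z) \<Rightarrow> \<delta> * indicator (- set_pmf q) x) \<le> (case xz of (x, z) \<Rightarrow> norm (x - z))"
      using set_pmf_coupling[OF \<pi>] assms(3) by (auto split: prod.splits simp: indicator_def)
  qed
  finally show "\<delta> * measure p (- set_pmf q) \<le> measure_pmf.expectation \<pi> (\<lambda>(x, z). norm (x - z))" .
qed

section \<open>Orthonormal bases of finite spans and the directional distance\<close>

lemma orthogonal_sub_orthonormal_projection:
  fixes b :: "'a::real_inner"
  assumes "finite C" "pairwise orthogonal C" "\<And>c. c \<in> C \<Longrightarrow> norm c = 1" "c \<in> C"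
  shows "orthogonal c (b - (\<Sum>c'\<in>C. (c' \<bullet> b) *\<^sub>R c'))"
proof -
  have "c \<bullet> (\<Sum>c'\<in>C. (c' \<bullet> b) *\<^sub>R c') = (\<Sum>c'\<in>C. if c' = c then c \<bullet> b else 0)"
    unfolding inner_sum_right
  proof (rule sum.cong[OF refl])
    fix c' assume "c' \<in> C"
    then show "c \<bullet> (c' \<bullet> b) *\<^sub>R c' = (if c' = c then c \<bullet> b else 0)"
      using assms(2-4) by (auto simp: pairwise_def orthogonal_def dot_square_norm)
  qed
  also have "\<dots> = c \<bullet> b"
    using assms(1,4) by simp
  finally show ?thesis
    by (simp add: orthogonal_def inner_diff_right)
qed

lemma orthonormal_extend_span_insert:
  fixes b :: "'a::real_inner"
  assumes C: "finite C" "pairwise orthogonal C" "\<And>c. c \<in> C \<Longrightarrow> norm c = 1"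
  obtains C' where "finite C'" "card C' \<le> Suc (card C)" "pairwise orthogonal C'"
    "\<And>c. c \<in> C' \<Longrightarrow> norm c = 1" "span C' = span (insert b C)"
proof (cases "b \<in> span C")
  case True
  then show ?thesis
    using that[of C] C by (simp add: span_redundant)
next
  case False
  define r where "r = b - (\<Sum>c\<in>C. (c \<bullet> b) *\<^sub>R c)"
  define u where "u = r /\<^sub>R norm r"
  have proj_in_span: "(\<Sum>c\<in>C. (c \<bullet> b) *\<^sub>R c) \<in> span C"
    by (intro span_sum span_scale span_base)
  then have "r \<noteq> 0"
    using False by (auto simp: r_def)
  have "orthogonal c u" if "c \<in> C" for c
    using orthogonal_sub_orthonormal_projection[OF C that, of b]
    by (simp add: u_def r_def orthogonal_clauses)
  then have "pairwise orthogonal (insert u C)"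
    using C(2) by (intro pairwise_orthogonal_insert) (auto simp: orthogonal_commute)
  moreover have "span (insert u C) = span (insert b C)"
  proof -
    have "u \<in> span (insert b C)"
      using proj_in_span span_mono[of C "insert b C"] span_base[of b "insert b C"]
      unfolding u_def r_def by (intro span_scale span_diff) auto
    moreover have "b \<in> span (insert u C)"
    proof -
      have "b = norm r *\<^sub>R u + (\<Sum>c\<in>C. (c \<bullet> b) *\<^sub>R c)"
        using \<open>r \<noteq> 0\<close> by (simp add: u_def r_def)
      moreover have "norm r *\<^sub>R u \<in> span (insert u C)"
        by (intro span_scale span_base) simp
      moreover have "(\<Sum>c\<in>C. (c \<bullet> b) *\<^sub>R c) \<in> span (insert u C)"
        using proj_in_span span_mono[of C "insert u C"] by blast
      ultimately show ?thesis
        by (metis span_add)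
    qed
    ultimately show ?thesis
      unfolding span_eq by (auto intro: span_base)
  qed
  ultimately show ?thesis
    using C \<open>r \<noteq> 0\<close> by (intro that[of "insert u C"]) (auto simp: u_def card_insert_if)
qed

lemma orthonormal_basis_of_span_finite:
  fixes B :: "'a::real_inner set"
  assumes "finite B"
  obtains C where "finite C" "card C \<le> card B" "pairwise orthogonal C"
    "\<And>c. c \<in> C \<Longrightarrow> norm c = 1" "span C = span B"
  using assms
proof (induction B arbitrary: thesis rule: finite_induct)
  case empty
  show ?case
    by (rule empty.prems[of "{}"]) auto
next
  case (insert b B)
  obtain C where C: "finite C" "card C \<le> card B" "pairwise orthogonal C"
    "\<And>c. c \<in> C \<Longrightarrow> norm c = 1" "span C = span B"
    using insert.IH by blast
  obtain C' where C': "finite C'" "card C' \<le> Suc (card C)" "pairwise orthogonal C'"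
    "\<And>c. c \<in> C' \<Longrightarrow> norm c = 1" "span C' = span (insert b C)"
    using orthonormal_extend_span_insert[OF C(1,3,4)] by blast
  have "span (insert b C) = span (insert b B)"
    using C(5) by (simp add: span_insert)
  then show ?case
    using C' C(2) insert.hyps by (intro insert.prems[of C']) auto
qed

lemma norm_sq_eq_sum_inner_sq_orthonormal:
  fixes v :: "'a::real_inner"
  assumes "finite C" "pairwise orthogonal C" "\<And>c. c \<in> C \<Longrightarrow> norm c = 1" "v \<in> span C"
  shows "(norm v)\<^sup>2 = (\<Sum>c\<in>C. (c \<bullet> v)\<^sup>2)"
proof -
  have "(norm v)\<^sup>2 = v \<bullet> (\<Sum>c\<in>C. (v \<bullet> c) *\<^sub>R c)"
    using orthonormal_basis_expand[OF assms(2,3,4,1)] by (simp add: dot_square_norm)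
  also have "\<dots> = (\<Sum>c\<in>C. (c \<bullet> v)\<^sup>2)"
    by (simp add: inner_sum_right power2_eq_square inner_commute)
  finally show ?thesis .
qed

lemma second_moment_le_dim_mul_SUP_directional:
  fixes M :: "'a::real_inner pmf" and d :: nat
  assumes M: "finite (set_pmf M)" "set_pmf M \<subseteq> span B"
    and B: "finite B" "card B \<le> d"
  shows "measure_pmf.expectation M (\<lambda>v. (norm v)\<^sup>2)
           \<le> d * (SUP w\<in>{w. norm w \<le> 1}. measure_pmf.expectation M (\<lambda>v. (w \<bullet> v)\<^sup>2))"
proof -
  define Q where "Q w = measure_pmf.expectation M (\<lambda>v. (w \<bullet> v)\<^sup>2)" for w
  obtain C where C: "finite C" "card C \<le> card B" "pairwise orthogonal C"
    "\<And>c. c \<in> C \<Longrightarrow> norm c = 1" "span C = span B"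
    using orthonormal_basis_of_span_finite[OF B(1)] by blast
  have "Q w \<le> measure_pmf.expectation M (\<lambda>v. (norm v)\<^sup>2)" if "norm w \<le> 1" for w
    unfolding Q_def
  proof (rule integral_mono_finite_pmf[OF M(1)])
    fix v
    have "\<bar>w \<bullet> v\<bar> \<le> norm v"
      using Cauchy_Schwarz_ineq2[of w v] that by (simp add: mult_left_le_one_le order_trans)
    then show "(w \<bullet> v)\<^sup>2 \<le> (norm v)\<^sup>2"
      using power_mono[OF _ abs_ge_zero, of "w \<bullet> v" "norm v" 2] by simp
  qed
  then have bdd: "bdd_above (Q ` {w. norm w \<le> 1})"
    by (intro bdd_aboveI) auto
  have Q_le_SUP: "Q w \<le> (SUP w\<in>{w. norm w \<le> 1}. Q w)" if "norm w \<le> 1" for w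
    using bdd that by (intro cSUP_upper) auto
  have "measure_pmf.expectation M (\<lambda>v. (norm v)\<^sup>2)
          = measure_pmf.expectation M (\<lambda>v. \<Sum>c\<in>C. (c \<bullet> v)\<^sup>2)"
    using M C by (intro integral_cong_AE AE_pmfI) (auto intro!: norm_sq_eq_sum_inner_sq_orthonormal)
  also have "\<dots> = (\<Sum>c\<in>C. Q c)"
    unfolding Q_def using M(1) by (intro Bochner_Integration.integral_sum integrable_measure_pmf_finite)
  also have "\<dots> \<le> (\<Sum>c\<in>C. SUP w\<in>{w. norm w \<le> 1}. Q w)"
    using C(4) by (intro sum_mono Q_le_SUP) simp
  also have "\<dots> \<le> d * (SUP w\<in>{w. norm w \<le> 1}. Q w)"
  proof -
    have "0 \<le> (SUP w\<in>{w. norm w \<le> 1}. Q w)"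
      using Q_le_SUP[of 0] by (simp add: Q_def)
    then show ?thesis
      using C(2) B(2) by (simp add: mult_right_mono)
  qed
  finally show ?thesis unfolding Q_def .
qed

lemma W2_div_sqrt_dim_le_S1:
  fixes p q :: "'a::real_inner pmf" and d :: nat
  assumes "finite (set_pmf p)" "finite (set_pmf q)"
    and "finite B" "card B \<le> d" "0 < d" "set_pmf p \<subseteq> span B" "set_pmf q \<subseteq> span B"
  shows "W2 p q / sqrt d \<le> S1 p q"
  unfolding S1_def
proof (rule cINF_greatest)
  show "couplings p q \<noteq> {}"
    using pair_pmf_in_couplings by blast
next
  fix \<pi> assume \<pi>: "\<pi> \<in> couplings p q"
  define M where "M = map_pmf (\<lambda>(x, y). x - y) \<pi>"
  define S where "S = (SUP w\<in>{w. norm w \<le> 1}. measure_pmf.expectation M (\<lambda>v. (w \<bullet> v)\<^sup>2))"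
  have "finite (set_pmf M)"
    using finite_set_pmf_coupling[OF \<pi> assms(1,2)] by (simp add: M_def)
  moreover have "set_pmf M \<subseteq> span B"
    using set_pmf_coupling[OF \<pi>] assms(6,7) by (auto simp: M_def intro!: span_diff)
  ultimately have "measure_pmf.expectation M (\<lambda>v. (norm v)\<^sup>2) \<le> d * S"
    unfolding S_def using assms(3,4) by (rule second_moment_le_dim_mul_SUP_directional)
  moreover have "(W2 p q)\<^sup>2 \<le> measure_pmf.expectation M (\<lambda>v. (norm v)\<^sup>2)"
    using W2_sq_le_expectation[OF \<pi>] by (simp add: M_def case_prod_beta')
  ultimately have "W2 p q / sqrt d \<le> sqrt S"
    using assms(5)
    by (simp add: real_le_rsqrt power_divide field_simps W2_def)
  then show "W2 p q / sqrt d \<le> sqrt (SUP w\<in>{w. norm w \<le> 1}.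
      measure_pmf.expectation \<pi> (\<lambda>(x, y). (w \<bullet> (x - y))\<^sup>2))"
    by (simp add: S_def M_def case_prod_beta')
qed

section \<open>Empirical measures of i.i.d. samples\<close>

lemma set_pmf_empirical:
  assumes "n > 0"
  shows "set_pmf (empirical n y) = y ` {..<n}"
  using assms by (simp add: empirical_def lessThan_empty_iff)

lemma pmf_empirical_inj:
  assumes "inj_on y {..<n}" "i < n"
  shows "pmf (empirical n y) (y i) = 1 / n"
  using assms by (auto simp: empirical_def pmf_map_inj lessThan_empty_iff)

lemma set_pmf_iid_sample:
  "set_pmf (iid_sample n p) = PiE_dflt {..<n} 0 (\<lambda>_. set_pmf p)"
  by (simp add: iid_sample_def set_Pi_pmf o_def)

lemma finite_set_pmf_iid_sample:
  "finite (set_pmf p) \<Longrightarrow> finite (set_pmf (iid_sample n p))"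
  by (simp add: set_pmf_iid_sample finite_PiE_dflt)

lemma set_pmf_empirical_subset_iid_sample:
  assumes "n > 0" "X \<in> set_pmf (iid_sample n p)"
  shows "set_pmf (empirical n X) \<subseteq> set_pmf p"
  using assms by (auto simp: set_pmf_empirical set_pmf_iid_sample PiE_dflt_def)

lemma prob_iid_sample_misses:
  "measure (iid_sample n p) {X. \<forall>j<n. X j \<noteq> a} = (1 - pmf p a) ^ n"
proof -
  have "{X. \<forall>j<n. X j \<noteq> a} = Pi {..<n} (\<lambda>_. - {a})"
    by auto
  moreover have "measure p (- {a}) = 1 - pmf p a"
    using measure_pmf.prob_compl[of "{a}" p] by (simp add: Compl_eq_Diff_UNIV measure_pmf_single)
  ultimately show ?thesis
    by (simp add: iid_sample_def measure_Pi_pmf_Pi)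
qed

lemma expectation_missing_mass:
  assumes "finite (set_pmf p)"
  shows "measure_pmf.expectation (iid_sample n p) (\<lambda>X. measure p (- X ` {..<n}))
           = (\<Sum>a\<in>set_pmf p. pmf p a * (1 - pmf p a) ^ n)"
proof -
  have "measure p (- X ` {..<n})
          = (\<Sum>a\<in>set_pmf p. pmf p a * indicator {X. \<forall>j<n. X j \<noteq> a} X)" for X
  proof -
    have "measure p (- X ` {..<n}) = measure p (set_pmf p \<inter> - X ` {..<n})"
      using measure_Int_set_pmf[of p "- X ` {..<n}"] by (simp add: Int_commute)
    also have "\<dots> = (\<Sum>a\<in>set_pmf p. if a \<in> - X ` {..<n} then pmf p a else 0)"
      using assms by (simp add: measure_measure_pmf_finite sum.inter_restrict)
    finally show ?thesis
      by (auto intro!: sum.cong simp: indicator_def)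
  qed
  then have "measure_pmf.expectation (iid_sample n p) (\<lambda>X. measure p (- X ` {..<n}))
      = (\<Sum>a\<in>set_pmf p. pmf p a * measure (iid_sample n p) {X. \<forall>j<n. X j \<noteq> a})"
    by (simp add: Bochner_Integration.integral_sum measure_pmf.emeasure_finite less_top[symmetric])
  then show ?thesis
    by (simp add: prob_iid_sample_misses)
qed

lemma expected_missing_mass_empirical:
  assumes "n > 0" "inj_on y {..<n}"
  shows "measure_pmf.expectation (iid_sample n (empirical n y))
           (\<lambda>X. measure (empirical n y) (- X ` {..<n})) = (1 - 1 / real n) ^ n"
proof -
  have "measure_pmf.expectation (iid_sample n (empirical n y))
          (\<lambda>X. measure (empirical n y) (- X ` {..<n}))
        = (\<Sum>i<n. pmf (empirical n y) (y i) * (1 - pmf (empirical n y) (y i)) ^ n)"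
    using assms by (simp add: expectation_missing_mass set_pmf_empirical sum.reindex)
  also have "\<dots> = (\<Sum>i<n. 1 / real n * (1 - 1 / real n) ^ n)"
    using assms(2) by (intro sum.cong) (simp_all add: pmf_empirical_inj)
  finally show ?thesis
    using assms(1) by simp
qed

lemma one_minus_inverse_power_ge:
  assumes "n \<ge> 2"
  shows "1 / (2 * exp 1) \<le> (1 - 1 / real n) ^ n"
proof -
  obtain m where n: "n = Suc m"
    using assms by (cases n) auto
  have m: "m \<ge> 1"
    using assms n by simp
  have base: "1 - 1 / real n = 1 / (1 + 1 / real m)"
    using m by (simp add: n field_simps)
  have "(1 + 1 / real m) ^ m \<le> exp 1"
    by (rule exp_ge_one_plus_x_over_n_power_n) (use m in auto)
  moreover have "0 < (1 + 1 / real m) ^ m"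
    by (simp add: add_pos_nonneg)
  moreover have "1 / 2 \<le> 1 - 1 / real n"
    using assms by (simp add: field_simps)
  ultimately have "(1 / 2) / exp 1 \<le> (1 - 1 / real n) / (1 + 1 / real m) ^ m"
    by (intro frac_le) linarith+
  also have "\<dots> = (1 - 1 / real n) * (1 - 1 / real n) ^ m"
    unfolding base by (simp add: power_one_over)
  also have "\<dots> = (1 - 1 / real n) ^ n"
    by (simp add: n)
  finally show ?thesis by simp
qed

lemma expectation_W1_empirical_ge:
  fixes y :: "nat \<Rightarrow> 'a::real_normed_vector"
  assumes "n > 0" "\<delta> > 0" and sep: "\<forall>i<n. \<forall>j<n. i \<noteq> j \<longrightarrow> \<delta> \<le> norm (y i - y j)"
  shows "\<delta> * (1 - 1 / real n) ^ n
           \<le> measure_pmf.expectation (iid_sample n (empirical n y))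
               (\<lambda>X. W1 (empirical n y) (empirical n X))"
proof -
  let ?\<mu> = "empirical n y" and ?P = "iid_sample n (empirical n y)"
  have inj: "inj_on y {..<n}"
    using sep \<open>\<delta> > 0\<close> by (force intro: inj_onI)
  have fin: "finite (set_pmf ?\<mu>)"
    using assms(1) by (simp add: set_pmf_empirical)
  have "\<delta> * (1 - 1 / real n) ^ n = measure_pmf.expectation ?P (\<lambda>X. \<delta> * measure ?\<mu> (- X ` {..<n}))"
    using expected_missing_mass_empirical[OF assms(1) inj] by simp
  also have "\<dots> \<le> measure_pmf.expectation ?P (\<lambda>X. W1 ?\<mu> (empirical n X))"
  proof (rule integral_mono_finite_pmf[OF finite_set_pmf_iid_sample[OF fin]])
    fix X assume X: "X \<in> set_pmf ?P"
    have supp_X: "set_pmf (empirical n X) \<subseteq> y ` {..<n}"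
      using set_pmf_empirical_subset_iid_sample[OF assms(1) X] assms(1) by (simp add: set_pmf_empirical)
    have "\<delta> \<le> norm (x - z)" if "x \<in> y ` {..<n}" "z \<in> y ` {..<n}" "x \<noteq> z" for x z
      using that sep by auto
    then have "\<delta> * measure ?\<mu> (- set_pmf (empirical n X)) \<le> W1 ?\<mu> (empirical n X)"
      using fin supp_X assms(1)
      by (intro W1_ge_separated) (auto simp: set_pmf_empirical intro: finite_subset)
    then show "\<delta> * measure ?\<mu> (- X ` {..<n}) \<le> W1 ?\<mu> (empirical n X)"
      using assms(1) by (simp add: set_pmf_empirical)
  qed
  finally show ?thesis .
qed

lemma expectation_W1_empirical_ge_separated:
  fixes y :: "nat \<Rightarrow> 'a::real_normed_vector"
  assumes "n \<ge> 2" "\<forall>i<n. \<forall>j<n. i \<noteq> j \<longrightarrow> norm (y i - y j) > 1/3"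
  shows "1 / (12 * sqrt 2) \<le> measure_pmf.expectation (iid_sample n (empirical n y))
           (\<lambda>X. W1 (empirical n y) (empirical n X))"
proof -
  have "exp 1 \<le> 2 * sqrt 2"
    using e_less_272 real_le_rsqrt[of "136 / 100" 2] by (simp add: power2_eq_square)
  then have "1 / (12 * sqrt 2) \<le> 1 / 3 * (1 / (2 * exp 1))"
    by (simp add: field_simps)
  also have "\<dots> \<le> 1 / 3 * (1 - 1 / real n) ^ n"
    using one_minus_inverse_power_ge[OF assms(1)] by simp
  also have "\<dots> \<le> measure_pmf.expectation (iid_sample n (empirical n y))
                    (\<lambda>X. W1 (empirical n y) (empirical n X))"
    using assms by (intro expectation_W1_empirical_ge) (auto simp: less_imp_le)
  finally show ?thesis .
qed

lemma expectation_W1_le_W2_sample: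
  assumes "n > 0" "finite (set_pmf p)"
  shows "measure_pmf.expectation (iid_sample n p) (\<lambda>X. W1 p (empirical n X))
           \<le> measure_pmf.expectation (iid_sample n p) (\<lambda>X. W2 p (empirical n X))"
  using assms set_pmf_empirical_subset_iid_sample[OF assms(1)]
  by (intro integral_mono_finite_pmf finite_set_pmf_iid_sample W1_le_W2) (auto intro: finite_subset)

lemma expectation_W1_div_sqrt_dim_le_S1:
  fixes p :: "'a::real_inner pmf" and d :: nat
  assumes "n > 0" "finite (set_pmf p)" "finite B" "card B \<le> d" "0 < d" "set_pmf p \<subseteq> span B"
  shows "measure_pmf.expectation (iid_sample n p) (\<lambda>X. W1 p (empirical n X)) / sqrt d
           \<le> sqrt (measure_pmf.expectation (iid_sample n p) (\<lambda>X. (S1 p (empirical n X))\<^sup>2))"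
proof -
  have "measure_pmf.expectation (iid_sample n p) (\<lambda>X. W1 p (empirical n X) / sqrt d)
          \<le> sqrt (measure_pmf.expectation (iid_sample n p) (\<lambda>X. (S1 p (empirical n X))\<^sup>2))"
  proof (rule expectation_le_sqrt_expectation_square[OF finite_set_pmf_iid_sample[OF assms(2)]])
    fix X assume X: "X \<in> set_pmf (iid_sample n p)"
    have supp_X: "set_pmf (empirical n X) \<subseteq> set_pmf p" "finite (set_pmf (empirical n X))"
      using set_pmf_empirical_subset_iid_sample[OF assms(1) X] assms(2) by (auto intro: finite_subset)
    have "W1 p (empirical n X) / sqrt d \<le> W2 p (empirical n X) / sqrt d"
      using W1_le_W2[OF assms(2) supp_X(2)] by (simp add: divide_right_mono)
    also have "\<dots> \<le> S1 p (empirical n X)"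
      using supp_X assms by (intro W2_div_sqrt_dim_le_S1) auto
    finally show "0 \<le> W1 p (empirical n X) / sqrt d \<and> W1 p (empirical n X) / sqrt d \<le> S1 p (empirical n X)"
      by (simp add: W1_nonneg)
  qed
  then show ?thesis
    by simp
qed

theorem mainTheorem10:
  fixes y :: "nat \<Rightarrow> 'a::{real_inner, complete_space}" and n :: nat
  assumes "n \<ge> 2"
    and "\<forall>i<n. norm (y i) \<le> 1"
    and "\<forall>i<n. \<forall>j<n. i \<noteq> j \<longrightarrow> norm (y i - y j) > 1/3"
  shows "measure_pmf.expectation (iid_sample n (empirical n y)) (\<lambda>X. W2 (empirical n y) (empirical n X))
           \<ge> measure_pmf.expectation (iid_sample n (empirical n y)) (\<lambda>X. W1 (empirical n y) (empirical n X))
       \<and> measure_pmf.expectation (iid_sample n (empirical n y)) (\<lambda>X. W1 (empirical n y) (empirical n X))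
           \<ge> 1 / (12 * sqrt 2)
       \<and> (\<forall>d::nat. (\<exists>B. finite B \<and> independent B \<and> card B = d \<and> (\<forall>i<n. y i \<in> span B)) \<longrightarrow>
            sqrt (measure_pmf.expectation (iid_sample n (empirical n y))
                    (\<lambda>X. (S1 (empirical n y) (empirical n X))^2))
              \<ge> 1 / (12 * sqrt (2 * real d)))"
proof -
  let ?\<mu> = "empirical n y"
  let ?EW1 = "measure_pmf.expectation (iid_sample n ?\<mu>) (\<lambda>X. W1 ?\<mu> (empirical n X))"
  have n: "n > 0" and supp: "set_pmf ?\<mu> = y ` {..<n}"
    using assms(1) by (simp_all add: set_pmf_empirical)
  then have fin: "finite (set_pmf ?\<mu>)"
    by simp
  have EW1: "1 / (12 * sqrt 2) \<le> ?EW1"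
    using assms(1,3) by (rule expectation_W1_empirical_ge_separated)
  have "1 / (12 * sqrt (2 * real d)) \<le> sqrt (measure_pmf.expectation (iid_sample n ?\<mu>)
          (\<lambda>X. (S1 ?\<mu> (empirical n X))\<^sup>2))"
    if "finite B" "card B = d" "\<forall>i<n. y i \<in> span B" for B d
  proof (cases "d = 0")
    case False
    have "1 / (12 * sqrt (2 * real d)) \<le> ?EW1 / sqrt d"
      using EW1 False by (simp add: real_sqrt_mult divide_right_mono flip: divide_divide_eq_left)
    also have "\<dots> \<le> sqrt (measure_pmf.expectation (iid_sample n ?\<mu>) (\<lambda>X. (S1 ?\<mu> (empirical n X))\<^sup>2))"
      using that False supp by (intro expectation_W1_div_sqrt_dim_le_S1 n) auto
    finally show ?thesis .
  qed (simp add: integral_nonneg_AE) \<comment> \<open>for \<open>d = 0\<close> the bound is \<open>1 / 0 = 0\<close>\<close>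
  then show ?thesis
    using EW1 expectation_W1_le_W2_sample[OF n fin] by auto
qed

end
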